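(* In the two-stage mining game, suppose miners are homogeneous in their initial costs, $\tilde c_1=\dots=\tilde c_N$, and $\gamma>0$. Fix all parameters except $\eta$ and consider $\eta$ large enough that $A(\beta^* )=A(0)=\{1,\dots,n\}$. Then, as $\eta\to\infty$, $$\Pi^*(\beta^* )=\Pi^*(0)+b\,H^*(0)\,\bar I+O(\bar I^2),\qquad b:=\frac1n\Big(1-\frac{c_0^{(n)}+\gamma H^*(0)}{c_0^{(n)}+2\gamma H^*(0)}\Big)>0,$$ and $b\to0$ as $\gamma\to0$. Here $O(\bar I^2)$ denotes a remainder bounded in absolute value by $C\bar I^2$ for some constant $C$ and all sufficiently large $\eta$.
   Context: Two-stage mining game: $N\ge2$ miners with initial costs-per-hash $\tilde c_i>0$; newest hardware cost $\tilde c_0\le\min_i\tilde c_i$; parameters $\eta\ge0$, $R>0$, $\gamma\ge0$, $K>0$. Stage 1: miner $i$ picks $\beta_i\in[0,1]$, giving cost $c_i(\beta_i)=\tilde c_i-\beta_i(\tilde c_i-\tilde c_0)+\frac{\eta(\tilde c_i-\tilde c_0)}{2}\beta_i^2$. Stage 2: given $\beta$, miners pick $h_i\ge0$, $H=\sum_jh_j$, payoff $\pi_i=\frac{h_i}{H}R-c_i(\beta_i)h_i-\frac{\gamma}{2}h_i^2-K\mathbf 1_{\{i\notin A(0),\beta_i>0\}}$ if $H>0$, else $0$; $h^*(\beta)$ is the unique stage-2 pure Nash equilibrium, $H^*(\beta)=\sum_jh_j^*(\beta)$, $A(\beta)=\{i:h_i^*(\beta)>0\}$, $\pi_i^*(\beta)$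 is miner $i$'s payoff at $(\beta,h^*(\beta))$, and $\Pi^*(\beta)=\sum_{i=1}^n\pi_i^*(\beta)$ is the aggregate profit. The equilibrium investment is $\beta_i^*=\min\{1/\eta,1\}$ for active miners and $0$ otherwise. Notation: $c_0^{(n)}=\sum_{i=1}^n\tilde c_i$; $I_i:=c_i(0)-c_i(\beta_i^* )$, equal to $(\tilde c_i-\tilde c_0)/(2\eta)$ for $\eta>1$; $\bar I=\sum_{i=1}^nI_i$. *)

theory Defs
  imports Complex_Main
begin

text \<open>Two-stage mining game. Miners are indexed by 1..n. Initial costs-per-hash ct i,
  newest hardware cost c0, parameters eta, R, gam (gamma), K.\<close>

definition cost :: "real \<Rightarrow> real \<Rightarrow> real \<Rightarrow> real \<Rightarrow> real" where
  "cost cti c0 eta b = cti - b * (cti - c0) + eta * (cti - c0) / 2 * b ^ 2"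

text \<open>Stage-2 payoff of miner i, given the set A0 = A(0) (entering the fixed-cost indicator),
  the investment profile beta, the cost vector cv (cv i = c_i(beta_i)) and the hash profile h.\<close>
definition payoff ::
  "nat \<Rightarrow> real \<Rightarrow> real \<Rightarrow> real \<Rightarrow> nat set \<Rightarrow> (nat \<Rightarrow> real) \<Rightarrow> (nat \<Rightarrow> real) \<Rightarrow> (nat \<Rightarrow> real) \<Rightarrow> nat \<Rightarrow> real"
  where
  "payoff n R gam K A0 beta cv h i =
     (let H = (\<Sum>j\<in>{1..n}. h j) in
      if H > 0 then h i / H * R - cv i * h i - gam / 2 * (h i) ^ 2
                    - (if i \<notin> A0 \<and> beta i > 0 then K else 0)
      else 0)"

definition is_NE ::
  "nat \<Rightarrow> real \<Rightarrow> real \<Rightarrow> real \<Rightarrow> nat set \<Rightarrow> (nat \<Rightarrow> real) \<Rightarrow> (nat \<Rightarrow> real) \<Rightarrow> (nat \<Rightarrow> real) \<Rightarrow> bool"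
  where
  "is_NE n R gam K A0 beta cv h \<longleftrightarrow>
     (\<forall>i. i \<notin> {1..n} \<longrightarrow> h i = 0) \<and>
     (\<forall>i\<in>{1..n}. h i \<ge> 0 \<and>
        (\<forall>x\<ge>0. payoff n R gam K A0 beta cv (h(i := x)) i \<le> payoff n R gam K A0 beta cv h i))"

definition hNE ::
  "nat \<Rightarrow> real \<Rightarrow> real \<Rightarrow> real \<Rightarrow> nat set \<Rightarrow> (nat \<Rightarrow> real) \<Rightarrow> (nat \<Rightarrow> real) \<Rightarrow> nat \<Rightarrow> real"
  where
  "hNE n R gam K A0 beta cv = (THE h. is_NE n R gam K A0 beta cv h)"

text \<open>A(0): active set at beta = 0 (there the fixed-cost indicator vanishes, so A0 is irrelevant).\<close>
definition Azero :: "nat \<Rightarrow> (nat \<Rightarrow> real) \<Rightarrow> real \<Rightarrow> real \<Rightarrow> real \<Rightarrow> nat set" where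
  "Azero n ct R gam K = {i\<in>{1..n}. hNE n R gam K {} (\<lambda>_. 0) ct i > 0}"

definition hstar ::
  "nat \<Rightarrow> (nat \<Rightarrow> real) \<Rightarrow> real \<Rightarrow> real \<Rightarrow> real \<Rightarrow> real \<Rightarrow> real \<Rightarrow> (nat \<Rightarrow> real) \<Rightarrow> nat \<Rightarrow> real"
  where
  "hstar n ct c0 eta R gam K beta =
     hNE n R gam K (Azero n ct R gam K) beta (\<lambda>i. cost (ct i) c0 eta (beta i))"

definition Hstar ::
  "nat \<Rightarrow> (nat \<Rightarrow> real) \<Rightarrow> real \<Rightarrow> real \<Rightarrow> real \<Rightarrow> real \<Rightarrow> real \<Rightarrow> (nat \<Rightarrow> real) \<Rightarrow> real"
  where
  "Hstar n ct c0 eta R gam K beta = (\<Sum>j\<in>{1..n}. hstar n ct c0 eta R gam K beta j)"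

definition Astar ::
  "nat \<Rightarrow> (nat \<Rightarrow> real) \<Rightarrow> real \<Rightarrow> real \<Rightarrow> real \<Rightarrow> real \<Rightarrow> real \<Rightarrow> (nat \<Rightarrow> real) \<Rightarrow> nat set"
  where
  "Astar n ct c0 eta R gam K beta = {i\<in>{1..n}. hstar n ct c0 eta R gam K beta i > 0}"

definition Pistar ::
  "nat \<Rightarrow> (nat \<Rightarrow> real) \<Rightarrow> real \<Rightarrow> real \<Rightarrow> real \<Rightarrow> real \<Rightarrow> real \<Rightarrow> (nat \<Rightarrow> real) \<Rightarrow> real"
  where
  "Pistar n ct c0 eta R gam K beta =
     (\<Sum>i\<in>{1..n}. payoff n R gam K (Azero n ct R gam K) beta
                    (\<lambda>j. cost (ct j) c0 eta (beta j)) (hstar n ct c0 eta R gam K beta) i)"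

definition betastar :: "nat \<Rightarrow> (nat \<Rightarrow> real) \<Rightarrow> real \<Rightarrow> real \<Rightarrow> real \<Rightarrow> real \<Rightarrow> nat \<Rightarrow> real" where
  "betastar n ct eta R gam K i = (if i \<in> Azero n ct R gam K then min (1 / eta) 1 else 0)"

definition Ibar :: "nat \<Rightarrow> (nat \<Rightarrow> real) \<Rightarrow> real \<Rightarrow> real \<Rightarrow> real \<Rightarrow> real \<Rightarrow> real \<Rightarrow> real" where
  "Ibar n ct c0 eta R gam K =
     (\<Sum>i\<in>{1..n}. cost (ct i) c0 eta 0 - cost (ct i) c0 eta (betastar n ct eta R gam K i))"

definition csum :: "nat \<Rightarrow> (nat \<Rightarrow> real) \<Rightarrow> real" where
  "csum n ct = (\<Sum>i\<in>{1..n}. ct i)"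

definition bcoef :: "nat \<Rightarrow> (nat \<Rightarrow> real) \<Rightarrow> real \<Rightarrow> real \<Rightarrow> real \<Rightarrow> real \<Rightarrow> real \<Rightarrow> real" where
  "bcoef n ct c0 eta R gam K =
     (let H0 = Hstar n ct c0 eta R gam K (\<lambda>_. 0) in
      1 / real n * (1 - (csum n ct + gam * H0) / (csum n ct + 2 * gam * H0)))"

end

theory Submission
  imports Defs
begin

(* With identical costs c and no fixed cost charged, miner i facing the others' total S gets the
  strictly concave Tullock payoff x/(x+S) R - c x - gamma x^2/2.  Its first-order conditions force
  every equilibrium to be the equal split of the positive root H of gamma H^2 + n c H = R (n - 1),
  and this profile is an equilibrium.  Investing lowers every cost by Delta = (c - c0)/(2 eta), so
  Ibar = n Delta, while by the quadratic the aggregate profit R - c H - gamma H^2/(2n) equals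
  R/n + gamma H^2/(2n), a function of H alone.  Expanding H(c - Delta) to second order gives the
  linear term b H(0) Ibar, with a remainder of order Delta^2 uniformly in Delta <= c/2.  Finally
  b = gamma H/(n (n c + 2 gamma H)) is positive and, as H <= R (n - 1)/(n c), of order gamma. *)

(* At x = S = 0 the share x/(x+S) is 0/0 = 0, matching the convention that payoffs vanish when
  nobody mines. *)
definition tullock_payoff :: "real \<Rightarrow> real \<Rightarrow> real \<Rightarrow> real \<Rightarrow> real \<Rightarrow> real" where
  "tullock_payoff R c g S x = x / (x + S) * R - c * x - g / 2 * x\<^sup>2"

lemma tullock_payoff_has_real_derivative:
  assumes "x + S \<noteq> 0"
  shows "(tullock_payoff R c g S has_real_derivative R * S / (x + S)\<^sup>2 - c - g * x) (at x)"
proof -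
  have "((\<lambda>x. x / (x + S) * R - c * x - g / 2 * x\<^sup>2) has_real_derivative
      ((1 * (x + S) - x * (1 + 0)) / ((x + S) * (x + S)) * R - c * 1 - g / 2 * (of_nat 2 * x ^ (2 - 1) * 1))) (at x)"
    by (rule derivative_eq_intros refl | simp add: assms)+
  then show ?thesis
    using assms unfolding tullock_payoff_def by (simp add: field_simps power2_eq_square)
qed

lemma tullock_payoff_gap:
  assumes x: "x + S \<noteq> 0" and h: "h + S \<noteq> 0" and foc: "c = R * S / (h + S)\<^sup>2 - g * h"
  shows "tullock_payoff R c g S h - tullock_payoff R c g S x
    = (h - x)\<^sup>2 * (R * S / ((h + S)\<^sup>2 * (x + S)) + g / 2)"
proof -
  have "p / P - y / Y = (p - y) * (S / (P * Y))" if "P = p + S" "Y = y + S" "P \<noteq> 0" "Y \<noteq> 0"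
    for p y P Y
    using that by (simp add: field_simps)
  from this[OF refl refl h x]
  have share: "h / (h + S) - x / (x + S) = (h - x) * (S / ((h + S) * (x + S)))" .
  have "R * S / (P * Y) - R * S / P\<^sup>2 = (P - Y) * (R * S / (P\<^sup>2 * Y))" if "P \<noteq> 0" "Y \<noteq> 0" for P Y
    using that by (simp add: field_simps power2_eq_square)
  from this[OF h x]
  have "R * S / ((h + S) * (x + S)) - R * S / (h + S)\<^sup>2 = (h - x) * (R * S / ((h + S)\<^sup>2 * (x + S)))"
    by simp
  then have marginal: "R * S / ((h + S) * (x + S)) - c - g / 2 * (h + x)
      = (h - x) * (R * S / ((h + S)\<^sup>2 * (x + S)) + g / 2)"
    unfolding foc by (simp add: algebra_simps add_divide_distrib diff_divide_distrib)
  have "tullock_payoff R c g S h - tullock_payoff R c g S x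
      = R * (h / (h + S) - x / (x + S)) - c * (h - x) - g / 2 * (h\<^sup>2 - x\<^sup>2)"
    unfolding tullock_payoff_def by (simp add: algebra_simps)
  also have "\<dots> = (h - x) * (R * S / ((h + S) * (x + S)) - c - g / 2 * (h + x))"
    unfolding share by (simp add: algebra_simps power2_eq_square add_divide_distrib diff_divide_distrib)
  finally show ?thesis unfolding marginal by (simp add: power2_eq_square)
qed

lemma tullock_payoff_le_critical:
  assumes S: "S > 0" and h: "h \<ge> 0" and x: "x \<ge> 0" and R: "R \<ge> 0" and g: "g \<ge> 0"
    and foc: "c = R * S / (h + S)\<^sup>2 - g * h"
  shows "tullock_payoff R c g S x \<le> tullock_payoff R c g S h"
proof -
  have "0 \<le> (h - x)\<^sup>2 * (R * S / ((h + S)\<^sup>2 * (x + S)) + g / 2)"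
    using S h x R g by (intro mult_nonneg_nonneg add_nonneg_nonneg) auto
  moreover have "x + S \<noteq> 0" "h + S \<noteq> 0" using S h x by auto
  ultimately show ?thesis using tullock_payoff_gap[OF _ _ foc] by fastforce
qed

lemma tullock_best_response_deriv_nonpos:
  assumes S: "S > 0" and h: "h \<ge> 0" and best: "\<forall>x\<ge>0. tullock_payoff R c g S x \<le> tullock_payoff R c g S h"
  shows "R * S / (h + S)\<^sup>2 - c - g * h \<le> 0"
proof (rule ccontr)
  assume "\<not> ?thesis"
  then obtain d where "d > 0" and up: "\<forall>e>0. e < d \<longrightarrow> tullock_payoff R c g S h < tullock_payoff R c g S (h + e)"
    using DERIV_pos_inc_right[OF tullock_payoff_has_real_derivative] S h by force
  then have "tullock_payoff R c g S h < tullock_payoff R c g S (h + d / 2)" by simp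
  moreover have "tullock_payoff R c g S (h + d / 2) \<le> tullock_payoff R c g S h"
    using best h \<open>d > 0\<close> by simp
  ultimately show False by simp
qed

lemma tullock_best_response_deriv_zero:
  assumes S: "S > 0" and h: "h > 0" and best: "\<forall>x\<ge>0. tullock_payoff R c g S x \<le> tullock_payoff R c g S h"
  shows "R * S / (h + S)\<^sup>2 - c - g * h = 0"
proof (rule DERIV_local_max[OF tullock_payoff_has_real_derivative h])
  show "h + S \<noteq> 0" using S h by simp
  show "\<forall>y. \<bar>h - y\<bar> < h \<longrightarrow> tullock_payoff R c g S y \<le> tullock_payoff R c g S h"
    using best by force
qed

lemma tullock_no_best_response_to_zero:
  assumes R: "R > 0" and c: "c > 0" and g: "g \<ge> 0" and h: "h \<ge> 0"
  shows "\<exists>x\<ge>0. tullock_payoff R c g 0 h < tullock_payoff R c g 0 x"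
proof (cases "h = 0")
  case True
  define x where "x = R / (R + c + g)"
  have x: "0 < x" "x < 1" "(c + g) * x < R"
    using R c g by (auto simp: x_def field_simps)
  have "g / 2 * x\<^sup>2 \<le> g * x"
  proof -
    have "x\<^sup>2 \<le> x" using x by (simp add: power2_eq_square mult_left_le)
    then have "g * x\<^sup>2 \<le> g * x" using g by (rule mult_left_mono)
    moreover have "0 \<le> g * x" using g x by simp
    ultimately show ?thesis by linarith
  qed
  then have "0 < tullock_payoff R c g 0 x"
    using x unfolding tullock_payoff_def by (simp add: algebra_simps)
  moreover have "tullock_payoff R c g 0 h = 0" using True by (simp add: tullock_payoff_def)
  ultimately show ?thesis using x(1) by (auto intro!: exI[of _ x])
next
  case False
  with h have "0 < c * h" "0 \<le> g * h * h" using c g by simp_all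
  then have "tullock_payoff R c g 0 h < tullock_payoff R c g 0 (h / 2)"
    using False unfolding tullock_payoff_def by (simp add: power2_eq_square field_simps)
  moreover have "h / 2 \<ge> 0" using h by simp
  ultimately show ?thesis by blast
qed

definition symmetric_total_hash :: "real \<Rightarrow> real \<Rightarrow> real \<Rightarrow> real \<Rightarrow> real" where
  "symmetric_total_hash m R g c = (sqrt ((m * c)\<^sup>2 + 4 * g * R * (m - 1)) - m * c) / (2 * g)"

lemma symmetric_total_hash:
  assumes m: "m > 1" and R: "R > 0" and g: "g > 0" and c: "c \<ge> 0"
  shows symmetric_total_hash_pos: "symmetric_total_hash m R g c > 0"
    and symmetric_total_hash_eq:
      "g * (symmetric_total_hash m R g c)\<^sup>2 + m * c * symmetric_total_hash m R g c = R * (m - 1)"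
proof -
  define D where "D = (m * c)\<^sup>2 + 4 * g * R * (m - 1)"
  have D: "D > (m * c)\<^sup>2" using m R g unfolding D_def by simp
  then have "D \<ge> 0" using zero_le_power2[of "m * c"] by linarith
  then have sqrt_D: "(sqrt D)\<^sup>2 = D" by simp
  have "m * c = sqrt ((m * c)\<^sup>2)" using m c by simp
  also have "\<dots> < sqrt D" using D by (rule real_sqrt_less_mono)
  finally have "sqrt D - m * c > 0" by simp
  then show "symmetric_total_hash m R g c > 0"
    using g unfolding symmetric_total_hash_def D_def by simp
  have "g * ((sqrt D - m * c) / (2 * g))\<^sup>2 + m * c * ((sqrt D - m * c) / (2 * g))
      = ((sqrt D)\<^sup>2 - (m * c)\<^sup>2) / (4 * g)"
    using g by (simp add: field_simps power2_eq_square)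
  also have "\<dots> = R * (m - 1)" using g unfolding sqrt_D by (simp add: D_def field_simps)
  finally show "g * (symmetric_total_hash m R g c)\<^sup>2 + m * c * symmetric_total_hash m R g c = R * (m - 1)"
    unfolding symmetric_total_hash_def D_def .
qed

lemma symmetric_total_hash_unique:
  assumes m: "m > 1" and R: "R > 0" and g: "g > 0" and c: "c \<ge> 0"
    and H: "H > 0" "g * H\<^sup>2 + m * c * H = R * (m - 1)"
  shows "H = symmetric_total_hash m R g c"
proof -
  define H' where "H' = symmetric_total_hash m R g c"
  have "g * H'\<^sup>2 + m * c * H' = R * (m - 1)" "H' > 0"
    using symmetric_total_hash[OF m R g c] unfolding H'_def by auto
  with H have "(H - H') * (g * (H + H') + m * c) = 0"
    by (simp add: algebra_simps power2_eq_square)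
  moreover have "g * (H + H') + m * c > 0"
    using g c m H \<open>H' > 0\<close> by (simp add: add_pos_nonneg)
  ultimately show ?thesis unfolding H'_def by simp
qed

lemma symmetric_total_hash_le:
  assumes m: "m > 1" and R: "R > 0" and g: "g > 0" and c: "c > 0"
  shows "symmetric_total_hash m R g c \<le> R * (m - 1) / (m * c)"
proof -
  define H where "H = symmetric_total_hash m R g c"
  have "g * H\<^sup>2 \<ge> 0" using g by simp
  moreover have "g * H\<^sup>2 + m * c * H = R * (m - 1)"
    using symmetric_total_hash_eq[OF m R g] c unfolding H_def by simp
  ultimately have "m * c * H \<le> R * (m - 1)" by linarith
  then show ?thesis using m c unfolding H_def by (simp add: field_simps)
qed

lemma profit_eq_of_quadratic:
  fixes m c g H Q R :: real
  assumes "m \<noteq> 0" and "g * H\<^sup>2 + m * c * H = Q"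
  shows "R - c * H - g * H\<^sup>2 / (2 * m) = R - Q / m + g * H\<^sup>2 / (2 * m)"
  unfolding assms(2)[symmetric] using assms(1) by (simp add: field_simps power2_eq_square)

lemma quadratic_root_shift:
  fixes m c g H H' \<Delta> Q :: real
  assumes "g * H\<^sup>2 + m * c * H = Q" and "g * H'\<^sup>2 + m * (c - \<Delta>) * H' = Q"
  shows "(H' - H) * (g * (H + H') + m * c) = m * \<Delta> * H'"
proof -
  have "(H' - H) * (g * (H + H') + m * c) - m * \<Delta> * H'
      = (g * H'\<^sup>2 + m * (c - \<Delta>) * H') - (g * H\<^sup>2 + m * c * H)"
    by (simp add: algebra_simps power2_eq_square)
  then show ?thesis using assms by simp
qed

lemma quadratic_root_shift_bounds:
  fixes m c g H H' \<Delta> Q :: real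
  assumes m: "m > 0" and c: "c > 0" and g: "g \<ge> 0" and H: "H > 0" and H': "H' > 0" and \<Delta>: "\<Delta> \<ge> 0"
    and eq: "g * H\<^sup>2 + m * c * H = Q" and eq': "g * H'\<^sup>2 + m * (c - \<Delta>) * H' = Q"
  shows "0 \<le> H' - H" and "H' - H \<le> \<Delta> * H' / c"
proof -
  define D where "D = g * (H + H') + m * c"
  have "D \<ge> m * c" using g H H' unfolding D_def by simp
  moreover have "m * c > 0" using m c by simp
  ultimately have D: "D > 0" by linarith
  have shift: "H' - H = m * \<Delta> * H' / D"
    using quadratic_root_shift[OF eq eq'] D unfolding D_def by (simp add: field_simps)
  show "0 \<le> H' - H" unfolding shift using m \<Delta> H' D by simp
  have "m * \<Delta> * H' / D \<le> m * \<Delta> * H' / (m * c)"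
    using \<open>D \<ge> m * c\<close> \<open>m * c > 0\<close> m \<Delta> H' by (intro divide_left_mono) auto
  then show "H' - H \<le> \<Delta> * H' / c" unfolding shift using m by simp
qed

lemma symmetric_profit_increment_eq:
  fixes m c g H H' \<Delta> Q R :: real
  assumes m: "m > 0" and c: "c > 0" and g: "g \<ge> 0" and H: "H > 0" and H': "H' > 0"
    and eq: "g * H\<^sup>2 + m * c * H = Q" and eq': "g * H'\<^sup>2 + m * (c - \<Delta>) * H' = Q"
  defines "D \<equiv> m * c + 2 * g * H"
  shows "(R - (c - \<Delta>) * H' - g * H'\<^sup>2 / (2 * m)) - (R - c * H - g * H\<^sup>2 / (2 * m)) - g * H\<^sup>2 / D * \<Delta>
    = g * (H' - H)\<^sup>2 / (2 * m) * (1 + 2 * H * (m * c + g * H) / (H' * D))"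
    (is "?E = ?F")
proof -
  have D: "D > 0" unfolding D_def using m c g H by (simp add: add_pos_nonneg)
  have E: "?E = g * (H'\<^sup>2 - H\<^sup>2) / (2 * m) - g * H\<^sup>2 / D * \<Delta>"
    using profit_eq_of_quadratic[OF _ eq] profit_eq_of_quadratic[OF _ eq'] m
    by (simp add: diff_divide_distrib right_diff_distrib)
  have "?E * (2 * m * H' * D) = g * (H'\<^sup>2 - H\<^sup>2) * H' * D - 2 * g * H\<^sup>2 * (m * \<Delta> * H')"
    unfolding E using m D by (simp add: field_simps)
  also have "\<dots> = g * (H'\<^sup>2 - H\<^sup>2) * H' * D - 2 * g * H\<^sup>2 * ((H' - H) * (g * (H + H') + m * c))"
    unfolding quadratic_root_shift[OF eq eq'] ..
  also have "\<dots> = g * (H' - H)\<^sup>2 * (H' * D + 2 * H * (m * c + g * H))"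
    unfolding D_def by (simp add: algebra_simps power2_eq_square)
  also have "\<dots> = ?F * (2 * m * H' * D)"
    using m H' D by (simp add: field_simps)
  finally have "?E * (2 * m * H' * D) = ?F * (2 * m * H' * D)" .
  moreover have "2 * m * H' * D \<noteq> 0" using m H' D by simp
  ultimately show ?thesis using mult_right_cancel by blast
qed

lemma symmetric_profit_expansion:
  fixes m c g H H' \<Delta> Q R :: real
  assumes m: "m > 0" and c: "c > 0" and g: "g > 0" and H: "H > 0" and H': "H' > 0"
    and \<Delta>: "\<Delta> \<ge> 0" "2 * \<Delta> \<le> c"
    and eq: "g * H\<^sup>2 + m * c * H = Q" and eq': "g * H'\<^sup>2 + m * (c - \<Delta>) * H' = Q"
  shows "\<bar>(R - (c - \<Delta>) * H' - g * H'\<^sup>2 / (2 * m)) - (R - c * H - g * H\<^sup>2 / (2 * m))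
      - g * H\<^sup>2 / (m * c + 2 * g * H) * \<Delta>\<bar> \<le> 6 * g * Q\<^sup>2 / (m ^ 3 * c ^ 4) * \<Delta>\<^sup>2"
proof -
  define D where "D = m * c + 2 * g * H"
  have D: "D > 0" unfolding D_def using m c g H by (simp add: add_pos_pos)
  let ?F = "g * (H' - H)\<^sup>2 / (2 * m) * (1 + 2 * H * (m * c + g * H) / (H' * D))"
  note shift = quadratic_root_shift_bounds[OF m c less_imp_le[OF g] H H' \<Delta>(1) eq eq']
  have "H * (m * c + g * H) \<le> H' * D"
    using shift(1) H g m c unfolding D_def by (intro mult_mono) auto
  then have ratio: "2 * H * (m * c + g * H) / (H' * D) \<le> 2"
    using H' D by (simp add: divide_le_eq)
  have "m * (c / 2) * H' \<le> m * (c - \<Delta>) * H'" using m H' \<Delta>(2) by simp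
  also have "\<dots> \<le> Q" using eq' mult_nonneg_nonneg[OF less_imp_le[OF g] zero_le_power2[of H']] by linarith
  finally have "H' \<le> 2 * Q / (m * c)" using m c by (simp add: field_simps)
  then have "\<Delta> * H' / c \<le> \<Delta> * (2 * Q / (m * c)) / c"
    using \<Delta>(1) c by (intro divide_right_mono mult_left_mono) auto
  also have "\<dots> = 2 * Q * \<Delta> / (m * c\<^sup>2)"
    using m c by (simp add: field_simps power2_eq_square)
  finally have "(H' - H)\<^sup>2 \<le> (2 * Q * \<Delta> / (m * c\<^sup>2))\<^sup>2"
    using shift by (intro power_mono) auto
  then have "?F \<le> g * (2 * Q * \<Delta> / (m * c\<^sup>2))\<^sup>2 / (2 * m) * 3"
    using ratio g m H H' D c by (intro mult_mono divide_right_mono mult_left_mono) auto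
  also have "\<dots> = 6 * g * Q\<^sup>2 / (m ^ 3 * c ^ 4) * \<Delta>\<^sup>2"
    using m c by (simp add: field_simps power2_eq_square eval_nat_numeral)
  finally have "?F \<le> 6 * g * Q\<^sup>2 / (m ^ 3 * c ^ 4) * \<Delta>\<^sup>2" .
  moreover have "0 \<le> ?F"
    using g m c H H' D by (intro mult_nonneg_nonneg add_nonneg_nonneg divide_nonneg_nonneg) auto
  ultimately show ?thesis
    using symmetric_profit_increment_eq[OF m c less_imp_le[OF g] H H' eq eq', of R]
    unfolding D_def by simp
qed

definition equal_split :: "nat \<Rightarrow> real \<Rightarrow> nat \<Rightarrow> real" where
  "equal_split n H = (\<lambda>i. if i \<in> {1..n} then H / n else 0)"

lemma sum_equal_split: "n \<ge> 1 \<Longrightarrow> (\<Sum>j\<in>{1..n}. equal_split n H j) = H"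
  unfolding equal_split_def by simp

lemma payoff_upd_eq_tullock_payoff:
  assumes i: "i \<in> {1..n}" and cv: "cv i = c" and no_fixed_cost: "\<not> (i \<notin> A0 \<and> 0 < beta i)"
    and h: "\<forall>j\<in>{1..n}. h j \<ge> 0" and x: "x \<ge> 0"
  shows "payoff n R g K A0 beta cv (h(i := x)) i
    = tullock_payoff R c g ((\<Sum>j\<in>{1..n}. h j) - h i) x"
proof -
  define S where "S = (\<Sum>j\<in>{1..n}. h j) - h i"
  have S: "S = (\<Sum>j\<in>{1..n} - {i}. h j)" using i unfolding S_def by (simp add: sum.remove)
  then have "S \<ge> 0" using h by (auto intro: sum_nonneg)
  have "(\<Sum>j\<in>{1..n}. (h(i := x)) j) = x + (\<Sum>j\<in>{1..n} - {i}. h j)"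
    using i by (simp add: sum.remove)
  then have total: "(\<Sum>j\<in>{1..n}. (h(i := x)) j) = x + S" unfolding S .
  show ?thesis
  proof (cases "x + S > 0")
    case True
    then show ?thesis
      using cv no_fixed_cost unfolding payoff_def tullock_payoff_def total Let_def S_def by auto
  next
    case False
    then have "x = 0" "S = 0" using x \<open>S \<ge> 0\<close> by auto
    then show ?thesis unfolding payoff_def tullock_payoff_def total Let_def S_def by simp
  qed
qed

context
  fixes n :: nat and R g c K :: real and A0 :: "nat set" and beta cv :: "nat \<Rightarrow> real"
  assumes n2: "n \<ge> 2" and R: "R > 0" and g: "g > 0" and c: "c > 0"
    and homogeneous: "\<forall>i\<in>{1..n}. cv i = c"
    and no_fixed_cost: "\<forall>i\<in>{1..n}. \<not> (i \<notin> A0 \<and> 0 < beta i)"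
begin

lemma payoff_eq_tullock_payoff:
  assumes i: "i \<in> {1..n}" and h: "\<forall>j\<in>{1..n}. h j \<ge> 0"
  defines "S \<equiv> (\<Sum>j\<in>{1..n}. h j) - h i"
  shows "\<forall>x\<ge>0. payoff n R g K A0 beta cv (h(i := x)) i = tullock_payoff R c g S x"
    and "payoff n R g K A0 beta cv h i = tullock_payoff R c g S (h i)"
  using payoff_upd_eq_tullock_payoff[OF i _ _ h, of cv c A0 beta] homogeneous no_fixed_cost i h
  unfolding S_def by (metis fun_upd_triv)+

lemma is_NE_equal_split: "is_NE n R g K A0 beta cv (equal_split n (symmetric_total_hash n R g c))"
proof -
  define H where "H = symmetric_total_hash n R g c"
  have n: "real n > 1" using n2 by simp
  have H: "H > 0" "g * H\<^sup>2 + n * c * H = R * (real n - 1)"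
    using symmetric_total_hash[OF n R g] c unfolding H_def by auto
  define h where "h = equal_split n H"
  have nonneg: "\<forall>i\<in>{1..n}. h i \<ge> 0" using H unfolding h_def equal_split_def by simp
  define S where "S = H - H / n"
  have S: "S > 0" using H n unfolding S_def by (simp add: field_simps)
  have "R * S / (H / n + S)\<^sup>2 - g * (H / n) = (R * (real n - 1) - g * H\<^sup>2) / (n * H)"
    using H n unfolding S_def by (simp add: field_simps power2_eq_square)
  also have "\<dots> = c" using H n by (simp add: field_simps)
  finally have foc: "c = R * S / (H / n + S)\<^sup>2 - g * (H / n)" ..
  have "payoff n R g K A0 beta cv (h(i := x)) i \<le> payoff n R g K A0 beta cv h i"
    if i: "i \<in> {1..n}" and x: "x \<ge> 0" for i x
  proof -
    have "(\<Sum>j\<in>{1..n}. h j) - h i = S" "h i = H / n"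
      using i n2 sum_equal_split[of n H] unfolding h_def S_def by (auto simp: equal_split_def)
    then show ?thesis
      using tullock_payoff_le_critical[OF S _ x _ _ foc] payoff_eq_tullock_payoff[OF i nonneg] x R g H
      by simp
  qed
  with nonneg show ?thesis unfolding is_NE_def h_def H_def equal_split_def by simp
qed

lemma is_NE_imp_best_response:
  assumes NE: "is_NE n R g K A0 beta cv h" and i: "i \<in> {1..n}"
  defines "S \<equiv> (\<Sum>j\<in>{1..n}. h j) - h i"
  shows "\<forall>x\<ge>0. tullock_payoff R c g S x \<le> tullock_payoff R c g S (h i)" and "S > 0"
proof -
  have nonneg: "\<forall>j\<in>{1..n}. h j \<ge> 0" using NE unfolding is_NE_def by blast
  show best: "\<forall>x\<ge>0. tullock_payoff R c g S x \<le> tullock_payoff R c g S (h i)"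
  proof (intro allI impI)
    fix x :: real assume "x \<ge> 0"
    then have "payoff n R g K A0 beta cv (h(i := x)) i \<le> payoff n R g K A0 beta cv h i"
      using NE i unfolding is_NE_def by blast
    then show "tullock_payoff R c g S x \<le> tullock_payoff R c g S (h i)"
      using payoff_eq_tullock_payoff[OF i nonneg] \<open>x \<ge> 0\<close> unfolding S_def by simp
  qed
  have "S = (\<Sum>j\<in>{1..n} - {i}. h j)" using i unfolding S_def by (simp add: sum.remove)
  then have "S \<ge> 0" using nonneg by (auto intro: sum_nonneg)
  moreover have "S \<noteq> 0"
    using tullock_no_best_response_to_zero[OF R c less_imp_le[OF g]] best nonneg i by fastforce
  ultimately show "S > 0" by simp
qed

lemma is_NE_imp_equal_shares:
  assumes NE: "is_NE n R g K A0 beta cv h"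
  defines "T \<equiv> \<Sum>j\<in>{1..n}. h j"
  shows "\<forall>i\<in>{1..n}. h i = T / n"
proof -
  have nonneg: "\<forall>j\<in>{1..n}. h j \<ge> 0" using NE unfolding is_NE_def by blast
  have one: "1 \<in> {1..n}" using n2 by simp
  have "T > 0" using is_NE_imp_best_response(2)[OF NE one] nonneg one unfolding T_def by force
  \<comment> \<open>Since S + h i = T for every miner, \<open>\<phi> (h i)\<close> is miner i's marginal payoff at its share.\<close>
  define \<phi> where "\<phi> y = R * (T - y) / T\<^sup>2 - c - g * y" for y
  have \<phi>_strict_antimono: "\<phi> z < \<phi> y" if "y < z" for y z
  proof -
    have "R * (T - z) / T\<^sup>2 \<le> R * (T - y) / T\<^sup>2"
      using that R by (intro divide_right_mono mult_left_mono) auto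
    moreover have "g * y < g * z" using that g by simp
    ultimately show ?thesis unfolding \<phi>_def by simp
  qed
  have \<phi>_nonpos: "\<phi> (h i) \<le> 0" and \<phi>_zero: "h i > 0 \<Longrightarrow> \<phi> (h i) = 0" if i: "i \<in> {1..n}" for i
  proof -
    note others_pos = is_NE_imp_best_response(2)[OF NE i]
      and best = is_NE_imp_best_response(1)[OF NE i]
    show "\<phi> (h i) \<le> 0"
      using tullock_best_response_deriv_nonpos[OF others_pos _ best] nonneg i
      unfolding \<phi>_def T_def by simp
    show "h i > 0 \<Longrightarrow> \<phi> (h i) = 0"
      using tullock_best_response_deriv_zero[OF others_pos _ best] unfolding \<phi>_def T_def by simp
  qed
  obtain k where k: "k \<in> {1..n}" "h k > 0"
  proof (rule ccontr)
    assume "\<not> thesis"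
    with that have "\<forall>k\<in>{1..n}. h k = 0" using nonneg by force
    then have "T = 0" unfolding T_def by simp
    with \<open>T > 0\<close> show False by simp
  qed
  have equal: "h i = h k" if i: "i \<in> {1..n}" for i
  proof (cases "h i > 0")
    case True
    show ?thesis
    proof (rule ccontr)
      assume "h i \<noteq> h k"
      then have "h i < h k \<or> h k < h i" by linarith
      then show False
        using \<phi>_zero[OF i True] \<phi>_zero[OF k(1,2)] by (auto dest: \<phi>_strict_antimono)
    qed
  next
    case False
    then have "h i = 0" using nonneg i by force
    then show ?thesis
      using \<phi>_nonpos[OF i] \<phi>_zero[OF k] \<phi>_strict_antimono[OF k(2)] by simp
  qed
  then have "T = n * h k" unfolding T_def by simp
  then show ?thesis using equal n2 by simp
qed

lemma is_NE_imp_equal_split: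
  assumes NE: "is_NE n R g K A0 beta cv h"
  shows "h = equal_split n (symmetric_total_hash n R g c)"
proof -
  define T where "T = (\<Sum>j\<in>{1..n}. h j)"
  have n: "real n > 1" using n2 by simp
  have one: "1 \<in> {1..n}" using n2 by simp
  have shares: "\<forall>i\<in>{1..n}. h i = T / n" using is_NE_imp_equal_shares[OF NE] unfolding T_def .
  have others_pos: "T - h 1 > 0"
    using is_NE_imp_best_response(2)[OF NE one] unfolding T_def .
  moreover have "h 1 \<ge> 0" using NE one unfolding is_NE_def by blast
  ultimately have "T > 0" by simp
  then have "h 1 > 0" using shares one n2 by simp
  then have "R * (T - h 1) / T\<^sup>2 - c - g * h 1 = 0"
    using tullock_best_response_deriv_zero[OF others_pos[unfolded T_def] _ is_NE_imp_best_response(1)[OF NE one]]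
    unfolding T_def by simp
  moreover have "R * (T - h 1) / T\<^sup>2 = R * (real n - 1) / (n * T)"
    using shares one \<open>T > 0\<close> n by (simp add: field_simps power2_eq_square)
  ultimately have "R * (real n - 1) / (n * T) = c + g * (T / n)"
    using shares one by simp
  moreover have "n * T \<noteq> 0" using \<open>T > 0\<close> n by simp
  ultimately have "R * (real n - 1) = (c + g * (T / n)) * (n * T)"
    by (simp add: divide_eq_eq)
  also have "\<dots> = g * T\<^sup>2 + n * c * T"
    using n by (simp add: field_simps power2_eq_square)
  finally have "g * T\<^sup>2 + n * c * T = R * (real n - 1)" ..
  then have "T = symmetric_total_hash n R g c"
    using symmetric_total_hash_unique[OF n R g] c \<open>T > 0\<close> by simp
  moreover have "\<forall>i. i \<notin> {1..n} \<longrightarrow> h i = 0" using NE unfolding is_NE_def by blast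
  ultimately show ?thesis using shares unfolding equal_split_def by auto
qed

lemma hNE_eq_equal_split: "hNE n R g K A0 beta cv = equal_split n (symmetric_total_hash n R g c)"
  unfolding hNE_def using is_NE_equal_split is_NE_imp_equal_split by (rule the_equality)

lemma sum_payoff_hNE:
  defines "H \<equiv> symmetric_total_hash n R g c"
  shows "(\<Sum>i\<in>{1..n}. payoff n R g K A0 beta cv (hNE n R g K A0 beta cv) i)
    = R - c * H - g * H\<^sup>2 / (2 * n)"
proof -
  have n: "real n > 1" using n2 by simp
  have "H > 0" using symmetric_total_hash_pos[OF n R g] c unfolding H_def by simp
  define h where "h = equal_split n H"
  have nonneg: "\<forall>j\<in>{1..n}. h j \<ge> 0" using \<open>H > 0\<close> unfolding h_def equal_split_def by simp
  have "payoff n R g K A0 beta cv h i = H / n / H * R - c * (H / n) - g / 2 * (H / n)\<^sup>2"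
    if i: "i \<in> {1..n}" for i
    using payoff_eq_tullock_payoff(2)[OF i nonneg] i n2 sum_equal_split[of n H]
    unfolding tullock_payoff_def h_def by (simp add: equal_split_def)
  then have "(\<Sum>i\<in>{1..n}. payoff n R g K A0 beta cv h i)
      = n * (H / n / H * R - c * (H / n) - g / 2 * (H / n)\<^sup>2)"
    by simp
  also have "\<dots> = R - c * H - g * H\<^sup>2 / (2 * n)"
    using \<open>H > 0\<close> n by (simp add: field_simps power2_eq_square)
  finally show ?thesis unfolding h_def H_def hNE_eq_equal_split .
qed

end

lemma Hstar_Pistar_homogeneous:
  assumes n2: "n \<ge> 2" and R: "R > 0" and g: "g > 0" and c: "c > 0"
    and homogeneous: "\<forall>i\<in>{1..n}. cost (ct i) c0 eta (beta i) = c"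
    and no_fixed_cost: "\<forall>i\<in>{1..n}. \<not> (i \<notin> Azero n ct R g K \<and> 0 < beta i)"
  defines "H \<equiv> symmetric_total_hash n R g c"
  shows "Hstar n ct c0 eta R g K beta = H"
    and "Pistar n ct c0 eta R g K beta = R - c * H - g * H\<^sup>2 / (2 * n)"
proof -
  note equilibrium = hNE_eq_equal_split[OF n2 R g c homogeneous no_fixed_cost]
  show "Hstar n ct c0 eta R g K beta = H"
    unfolding Hstar_def hstar_def equilibrium H_def using n2 by (intro sum_equal_split) simp
  show "Pistar n ct c0 eta R g K beta = R - c * H - g * H\<^sup>2 / (2 * n)"
    unfolding Pistar_def hstar_def H_def using sum_payoff_hNE[OF n2 R g c homogeneous no_fixed_cost] .
qed

lemma bcoef_eq:
  assumes n2: "n \<ge> 2" and homog: "\<forall>i\<in>{1..n}. ct i = cbar" and c: "cbar > 0"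
    and R: "R > 0" and g: "g > 0"
  defines "H \<equiv> symmetric_total_hash n R g cbar"
  shows "bcoef n ct c0 eta R g K = g * H / (n * (n * cbar + 2 * g * H))"
proof -
  have "Hstar n ct c0 eta R g K (\<lambda>_. 0) = H"
    using Hstar_Pistar_homogeneous(1)[OF n2 R g c] homog unfolding H_def by (simp add: cost_def)
  moreover have "csum n ct = n * cbar" unfolding csum_def using homog by simp
  moreover have "n * cbar + 2 * g * H > 0"
    using n2 c g symmetric_total_hash_pos[of n R g cbar] R unfolding H_def by (simp add: add_pos_pos)
  ultimately show ?thesis
    unfolding bcoef_def Let_def by (simp add: field_simps)
qed

lemma bcoef_pos:
  assumes n2: "n \<ge> 2" and homog: "\<forall>i\<in>{1..n}. ct i = cbar" and c: "cbar > 0"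
    and R: "R > 0" and g: "g > 0"
  shows "bcoef n ct c0 eta R g K > 0"
proof -
  define H where "H = symmetric_total_hash n R g cbar"
  have "H > 0" using symmetric_total_hash_pos[of n R g cbar] n2 R g c unfolding H_def by simp
  then have "g * H > 0" "n * (n * cbar + 2 * g * H) > 0" using g c n2 by (simp_all add: add_pos_pos)
  then show ?thesis using bcoef_eq[OF n2 homog c R g] unfolding H_def[symmetric] by simp
qed

lemma Pistar_betastar_expansion:
  assumes n2: "n \<ge> 2" and homog: "\<forall>i\<in>{1..n}. ct i = cbar" and c: "cbar > 0" and c0: "c0 \<le> cbar"
    and R: "R > 0" and g: "g > 0" and A0: "Azero n ct R g K = {1..n}"
    and eta: "eta \<ge> 1" "cbar - c0 \<le> eta * cbar"
  shows "\<bar>Pistar n ct c0 eta R g K (betastar n ct eta R g K) - Pistar n ct c0 eta R g K (\<lambda>_. 0)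
      - bcoef n ct c0 eta R g K * Hstar n ct c0 eta R g K (\<lambda>_. 0) * Ibar n ct c0 eta R g K\<bar>
    \<le> 6 * g * (R * (real n - 1))\<^sup>2 / (real n ^ 5 * cbar ^ 4) * (Ibar n ct c0 eta R g K)\<^sup>2"
proof -
  define \<Delta> where "\<Delta> = (cbar - c0) / (2 * eta)"
  have \<Delta>: "\<Delta> \<ge> 0" "2 * \<Delta> \<le> cbar"
    using c0 eta unfolding \<Delta>_def by (simp_all add: field_simps)
  have c': "cbar - \<Delta> > 0" using \<Delta> c by simp
  have n: "real n > 1" using n2 by simp
  have betastar: "betastar n ct eta R g K i = 1 / eta" if "i \<in> {1..n}" for i
    using that eta unfolding betastar_def A0 by simp
  have "cost cbar c0 eta (1 / eta) = cbar - \<Delta>"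
    using eta unfolding cost_def \<Delta>_def by (simp add: field_simps power2_eq_square)
  then have cost_betastar: "\<forall>i\<in>{1..n}. cost (ct i) c0 eta (betastar n ct eta R g K i) = cbar - \<Delta>"
    using homog betastar by simp
  have "\<forall>i\<in>{1..n}. cost (ct i) c0 eta 0 = cbar" using homog by (simp add: cost_def)
  then have Ibar: "Ibar n ct c0 eta R g K = n * \<Delta>"
    using cost_betastar unfolding Ibar_def by simp
  define H where "H = symmetric_total_hash n R g cbar"
  define H' where "H' = symmetric_total_hash n R g (cbar - \<Delta>)"
  have H: "H > 0" "g * H\<^sup>2 + n * cbar * H = R * (real n - 1)"
    using symmetric_total_hash[OF n R g] c unfolding H_def by auto
  have H': "H' > 0" "g * H'\<^sup>2 + n * (cbar - \<Delta>) * H' = R * (real n - 1)"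
    using symmetric_total_hash[OF n R g] c' unfolding H'_def by auto
  have zero: "Hstar n ct c0 eta R g K (\<lambda>_. 0) = H"
    "Pistar n ct c0 eta R g K (\<lambda>_. 0) = R - cbar * H - g * H\<^sup>2 / (2 * n)"
    using Hstar_Pistar_homogeneous[OF n2 R g c] homog unfolding H_def by (simp_all add: cost_def)
  have invest: "Pistar n ct c0 eta R g K (betastar n ct eta R g K)
      = R - (cbar - \<Delta>) * H' - g * H'\<^sup>2 / (2 * n)"
    using Hstar_Pistar_homogeneous(2)[OF n2 R g c' cost_betastar, of K] A0 unfolding H'_def by simp
  have "bcoef n ct c0 eta R g K * H * (n * \<Delta>) = g * H\<^sup>2 / (n * cbar + 2 * g * H) * \<Delta>"
    using bcoef_eq[OF n2 homog c R g] n unfolding H_def[symmetric] by (simp add: power2_eq_square)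
  moreover have "6 * g * (R * (real n - 1))\<^sup>2 / (real n ^ 5 * cbar ^ 4) * (n * \<Delta>)\<^sup>2
      = 6 * g * (R * (real n - 1))\<^sup>2 / (real n ^ 3 * cbar ^ 4) * \<Delta>\<^sup>2"
    using n c by (simp add: field_simps power2_eq_square eval_nat_numeral)
  ultimately show ?thesis
    unfolding zero invest Ibar
    using symmetric_profit_expansion[OF _ c g H(1) H'(1) \<Delta> H(2) H'(2), of R] n by simp
qed

lemma bcoef_tendsto_zero:
  assumes n2: "n \<ge> 2" and homog: "\<forall>i\<in>{1..n}. ct i = cbar" and c: "cbar > 0" and R: "R > 0"
  shows "((\<lambda>g. bcoef n ct c0 eta R g K) \<longlongrightarrow> 0) (at_right 0)"
proof (rule tendsto_sandwich)
  define B where "B = R * (real n - 1) / (n * cbar) / (n * (n * cbar))"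
  have n: "real n > 1" using n2 by simp
  have upper: "bcoef n ct c0 eta R g K \<le> g * B" if g: "g > 0" for g
  proof -
    define H where "H = symmetric_total_hash n R g cbar"
    have H: "0 < H" "H \<le> R * (real n - 1) / (n * cbar)"
      using symmetric_total_hash_pos[OF n R g] symmetric_total_hash_le[OF n R g c] c
      unfolding H_def by auto
    have nc: "n * cbar > 0" using n c by simp
    have "g * H / (n * (n * cbar + 2 * g * H)) \<le> g * H / (n * (n * cbar))"
      using H g nc n by (intro divide_left_mono mult_left_mono) (auto intro!: mult_pos_pos add_pos_pos)
    also have "\<dots> \<le> g * (R * (real n - 1) / (n * cbar)) / (n * (n * cbar))"
      using H g nc n by (intro divide_right_mono mult_left_mono) auto
    also have "\<dots> = g * B" unfolding B_def by simp
    finally show ?thesis using bcoef_eq[OF n2 homog c R g] unfolding H_def[symmetric] by simp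
  qed
  show "\<forall>\<^sub>F g in at_right 0. 0 \<le> bcoef n ct c0 eta R g K"
    using bcoef_pos[OF n2 homog c R, THEN less_imp_le]
    by (auto intro: eventually_at_right_less[THEN eventually_mono])
  show "\<forall>\<^sub>F g in at_right 0. bcoef n ct c0 eta R g K \<le> g * B"
    using upper by (auto intro: eventually_at_right_less[THEN eventually_mono])
  show "((\<lambda>_. 0) \<longlongrightarrow> (0::real)) (at_right 0)" by simp
  show "((\<lambda>g. g * B) \<longlongrightarrow> 0) (at_right (0::real))"
    by (intro tendsto_mult_left_zero tendsto_ident_at)
qed

theorem proposition5p5:
  fixes n :: nat and ct :: "nat \<Rightarrow> real" and cbar c0 R gam K eta1 :: real
  assumes n2: "n \<ge> 2"
    and homog: "\<forall>i\<in>{1..n}. ct i = cbar"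
    and cpos: "cbar > 0"
    and c0le: "c0 \<le> cbar"
    and Rpos: "R > 0"
    and gpos: "gam > 0"
    and Kpos: "K > 0"
    and A0: "Azero n ct R gam K = {1..n}"
  shows "bcoef n ct c0 eta1 R gam K > 0
    \<and> (\<exists>C eta0. \<forall>eta \<ge> eta0.
          Astar n ct c0 eta R gam K (betastar n ct eta R gam K) = {1..n} \<longrightarrow>
          \<bar>Pistar n ct c0 eta R gam K (betastar n ct eta R gam K)
            - Pistar n ct c0 eta R gam K (\<lambda>_. 0)
            - bcoef n ct c0 eta R gam K * Hstar n ct c0 eta R gam K (\<lambda>_. 0) * Ibar n ct c0 eta R gam K\<bar>
          \<le> C * (Ibar n ct c0 eta R gam K) ^ 2)
    \<and> ((\<lambda>g. bcoef n ct c0 eta1 R g K) \<longlongrightarrow> 0) (at_right 0)"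
proof (intro conjI exI allI impI)
  show "bcoef n ct c0 eta1 R gam K > 0" using bcoef_pos[OF n2 homog cpos Rpos gpos] .
  \<comment> \<open>The threshold makes \<open>\<beta>\<^sup>* = 1/\<eta>\<close> and keeps the lowered cost above \<open>cbar/2\<close>.\<close>
  fix eta assume "eta \<ge> max 1 ((cbar - c0) / cbar)"
  then have "eta \<ge> 1" "cbar - c0 \<le> eta * cbar" using cpos by (auto simp: field_simps)
  then show "\<bar>Pistar n ct c0 eta R gam K (betastar n ct eta R gam K)
            - Pistar n ct c0 eta R gam K (\<lambda>_. 0)
            - bcoef n ct c0 eta R gam K * Hstar n ct c0 eta R gam K (\<lambda>_. 0) * Ibar n ct c0 eta R gam K\<bar>
          \<le> 6 * gam * (R * (real n - 1))\<^sup>2 / (real n ^ 5 * cbar ^ 4) * (Ibar n ct c0 eta R gam K) ^ 2"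
    using Pistar_betastar_expansion[OF n2 homog cpos c0le Rpos gpos A0] by blast
next
  show "((\<lambda>g. bcoef n ct c0 eta1 R g K) \<longlongrightarrow> 0) (at_right 0)"
    using bcoef_tendsto_zero[OF n2 homog cpos Rpos] .
qed

end
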